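(* Let $\mathcal{X}$ be a finite set, $a:2^{\mathcal{X}}\to\mathbb{R}$ a monotone set function, $n\ge1$ and $l\ge1$ integers, and $\{\pi_\theta\}_{\theta\in\Theta}$ an expressive set-conditioned policy family. If $\theta^*\in\Theta$ is a greedy policy, i.e. $\mathcal{J}(\theta^*,\theta^* )\ge\mathcal{J}(\theta,\theta^* )$ for all $\theta\in\Theta$, then the set produced by $\mathrm{GS}(a,\pi_{\theta^*},n,l)$ is an exact greedy solution with probability $1$.
   Context: Marginal gain: $\Delta_a(x\mid B):=a(B\cup\{x\})-a(B)$. $a$ is monotone if $\Delta_a(x\mid B)\ge0$ for all $B\subseteq\mathcal X$, $x\in\mathcal X\setminus B$. A set-conditioned policy family assigns to each $\theta\in\Theta$ and each subset $B\subseteq\mathcal X$ a probability distribution $\pi_\theta(\cdot\mid B)$ on $\mathcal X$; it is expressive if for every assignment $B\mapsto p_B$ of probability distributions on $\mathcal X$ to subsets there is $\theta\in\Theta$ with $\pi_\theta(\cdot\mid B)=p_B$ for all $B$. Greedy sampling $\mathrm{GS}(a,\pi_\theta,k,l)$ is the random $k$-step procedure: $B_0=\emptyset$; for $i=0,\dots,k-1$, draw $l$ i.i.d. candidates $x_{i,0},\dots,x_{i,l-1}\sim\pi_\theta(\cdot\mid B_i)$, let $x_i$ be a candidate maximizing $\Delta_a(x_{i,j}\mid B_i)$ over $j$ (ties broken uniformly at random), and set $B_{i+1}=B_i\cup\{x_i\}$; output $B_k$. Expected gain: $\mathcal J(\theta,\theta'):=\frac1n\sum_{k=0}^{n-1}\mathbb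 E_{B\sim\mathrm{GS}(a,\pi_{\theta'},k,1)}\big[\mathbb E_{x\sim\pi_\theta(\cdot\mid B)}[\Delta_a(x\mid B)]\big]$. A set $B_n\subseteq\mathcal X$ is an exact greedy solution if there exist $x_0,\dots,x_{n-1}\in\mathcal X$ with $B_n=\{x_0,\dots,x_{n-1}\}$ and $x_t\in\arg\max_{x'\in\mathcal X}\Delta_a(x'\mid\{x_0,\dots,x_{t-1}\})$ for every $0\le t\le n-1$ (with $\{x_0,\dots,x_{-1}\}=\emptyset$). *)

theory Defs
  imports "HOL-Probability.Probability"
begin

definition marg_gain :: "('x set \<Rightarrow> real) \<Rightarrow> 'x \<Rightarrow> 'x set \<Rightarrow> real" where
  "marg_gain a x B = a (B \<union> {x}) - a B"

definition monotone_setfun :: "('x set \<Rightarrow> real) \<Rightarrow> bool" where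
  "monotone_setfun a \<longleftrightarrow> (\<forall>B x. x \<notin> B \<longrightarrow> marg_gain a x B \<ge> 0)"

definition expressive :: "('th \<Rightarrow> 'x set \<Rightarrow> 'x pmf) \<Rightarrow> bool" where
  "expressive pol \<longleftrightarrow> (\<forall>p :: 'x set \<Rightarrow> 'x pmf. \<exists>\<theta>. \<forall>B. pol \<theta> B = p B)"

definition gs_step :: "('x set \<Rightarrow> real) \<Rightarrow> 'x pmf \<Rightarrow> nat \<Rightarrow> 'x set \<Rightarrow> 'x set pmf" where
  "gs_step a p l B =
     do { xs \<leftarrow> replicate_pmf l p;
          let m = Max ((\<lambda>x. marg_gain a x B) ` set xs);
          j \<leftarrow> pmf_of_set {j. j < l \<and> marg_gain a (xs ! j) B = m};
          return_pmf (B \<union> {xs ! j}) }"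

fun GS :: "('x set \<Rightarrow> real) \<Rightarrow> ('th \<Rightarrow> 'x set \<Rightarrow> 'x pmf) \<Rightarrow> 'th \<Rightarrow> nat \<Rightarrow> nat \<Rightarrow> 'x set pmf" where
  "GS a pol \<theta> 0 l = return_pmf {}"
| "GS a pol \<theta> (Suc k) l = GS a pol \<theta> k l \<bind> (\<lambda>B. gs_step a (pol \<theta> B) l B)"

definition expected_gain ::
  "('x set \<Rightarrow> real) \<Rightarrow> ('th \<Rightarrow> 'x set \<Rightarrow> 'x pmf) \<Rightarrow> nat \<Rightarrow> 'th \<Rightarrow> 'th \<Rightarrow> real" where
  "expected_gain a pol n \<theta> \<theta>' =
     (1 / real n) * (\<Sum>k<n. measure_pmf.expectation (GS a pol \<theta>' k 1)
        (\<lambda>B. measure_pmf.expectation (pol \<theta> B) (\<lambda>x. marg_gain a x B)))"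

definition exact_greedy_solution :: "('x set \<Rightarrow> real) \<Rightarrow> nat \<Rightarrow> 'x set \<Rightarrow> bool" where
  "exact_greedy_solution a n Bn \<longleftrightarrow>
     (\<exists>xs. length xs = n \<and> Bn = set xs \<and>
        (\<forall>t<n. \<forall>x'. marg_gain a x' (set (take t xs)) \<le> marg_gain a (xs ! t) (set (take t xs))))"

end

theory Submission
  imports Defs
begin

text \<open>Replacing \<open>\<pi>\<^sub>\<theta>\<^sup>*\<close> by the deterministic policy that always proposes a candidate of
  maximal gain can only increase every summand of \<open>J(\<cdot>, \<theta>\<^sup>*)\<close>; by expressiveness this policy
  exists, so optimality of \<open>\<theta>\<^sup>*\<close> forces equality in every summand. Hence, on every set reached
  by single-candidate sampling in fewer than \<open>n\<close> steps, all candidates \<open>\<pi>\<^sub>\<theta>\<^sup>*\<close> can propose are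
  exact greedy choices. With \<open>l\<close> candidates the sampler only ever adds one of these candidates,
  so it stays among the sets reachable with one candidate and builds an exact greedy sequence.\<close>

lemma pmf_expectation_mono:
  fixes p :: "'a pmf" and f g :: "'a \<Rightarrow> real"
  assumes "finite (set_pmf p)" and "\<And>x. x \<in> set_pmf p \<Longrightarrow> f x \<le> g x"
  shows "measure_pmf.expectation p f \<le> measure_pmf.expectation p g"
  using assms by (intro integral_mono_AE integrable_measure_pmf_finite) (auto simp: AE_measure_pmf_iff)

lemma pmf_expectation_eq_imp_eq_on_support:
  fixes p :: "'a pmf" and f g :: "'a \<Rightarrow> real"
  assumes fin: "finite (set_pmf p)" and le: "\<And>x. x \<in> set_pmf p \<Longrightarrow> f x \<le> g x"
    and eq: "measure_pmf.expectation p f = measure_pmf.expectation p g"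
    and x: "x \<in> set_pmf p"
  shows "f x = g x"
proof -
  have int: "integrable (measure_pmf p) h" for h :: "'a \<Rightarrow> real"
    using fin by (rule integrable_measure_pmf_finite)
  have "measure_pmf.expectation p (\<lambda>y. g y - f y) = 0"
    using eq int by simp
  then have "AE y in measure_pmf p. g y - f y = 0"
    using le int by (subst (asm) integral_nonneg_eq_0_iff_AE) (auto simp: AE_measure_pmf_iff)
  then show ?thesis
    using x by (auto simp: AE_measure_pmf_iff)
qed

definition max_gain :: "('x::finite set \<Rightarrow> real) \<Rightarrow> 'x set \<Rightarrow> real" where
  "max_gain a B = Max (range (\<lambda>x. marg_gain a x B))"

lemma marg_gain_le_max_gain: "marg_gain a x B \<le> max_gain a B"
  unfolding max_gain_def by (intro Max_ge) auto

lemma ex_marg_gain_eq_max_gain: "\<exists>x. marg_gain a x B = max_gain a B"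
proof -
  have "max_gain a B \<in> range (\<lambda>x. marg_gain a x B)"
    unfolding max_gain_def by (intro Max_in) auto
  then show ?thesis by auto
qed

lemma expectation_le_max_gain:
  "measure_pmf.expectation p (\<lambda>x. marg_gain a x B) \<le> max_gain a B"
proof -
  have "measure_pmf.expectation p (\<lambda>x. marg_gain a x B)
      \<le> measure_pmf.expectation p (\<lambda>_. max_gain a B)"
    by (intro pmf_expectation_mono marg_gain_le_max_gain) simp
  then show ?thesis by simp
qed

lemma greedy_policy_proposes_max_gain:
  fixes a :: "('x::finite) set \<Rightarrow> real" and pol :: "'th \<Rightarrow> 'x set \<Rightarrow> 'x pmf"
  assumes "expressive pol"
    and opt: "\<forall>\<theta>. expected_gain a pol n \<theta>star \<theta>star \<ge> expected_gain a pol n \<theta> \<theta>star"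
    and "k < n" and B: "B \<in> set_pmf (GS a pol \<theta>star k 1)" and x: "x \<in> set_pmf (pol \<theta>star B)"
  shows "marg_gain a x B = max_gain a B"
proof -
  define e where "e \<theta> B = measure_pmf.expectation (pol \<theta> B) (\<lambda>x. marg_gain a x B)" for \<theta> B
  define E where "E i f = measure_pmf.expectation (GS a pol \<theta>star i 1) f"
    for i and f :: "'x set \<Rightarrow> real"
  have J: "expected_gain a pol n \<theta> \<theta>star = (\<Sum>i<n. E i (e \<theta>)) / real n" for \<theta>
    unfolding expected_gain_def e_def E_def by simp
  obtain \<theta>greedy where greedy: "\<And>B. pol \<theta>greedy B = return_pmf (SOME x. marg_gain a x B = max_gain a B)"
    using assms(1) unfolding expressive_def by fast
  have "e \<theta>greedy = max_gain a"
    unfolding e_def greedy by (simp add: fun_eq_iff someI_ex[OF ex_marg_gain_eq_max_gain])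
  then have sum_le: "(\<Sum>i<n. E i (max_gain a)) \<le> (\<Sum>i<n. E i (e \<theta>star))"
    using opt[rule_format, of \<theta>greedy] \<open>k < n\<close> unfolding J by (simp add: divide_le_cancel)
  have le: "E i (e \<theta>star) \<le> E i (max_gain a)" for i
    unfolding E_def e_def by (intro pmf_expectation_mono expectation_le_max_gain) simp
  have "E k (e \<theta>star) = E k (max_gain a)"
  proof (rule ccontr)
    assume "E k (e \<theta>star) \<noteq> E k (max_gain a)"
    then have "E k (e \<theta>star) < E k (max_gain a)"
      using le[of k] by simp
    then have "(\<Sum>i<n. E i (e \<theta>star)) < (\<Sum>i<n. E i (max_gain a))"
      using le \<open>k < n\<close> by (intro sum_strict_mono_ex1) auto
    then show False
      using sum_le by simp
  qed
  then have "e \<theta>star B = max_gain a B"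
    by (intro pmf_expectation_eq_imp_eq_on_support[of _ "e \<theta>star" "max_gain a", OF _ _ _ B])
      (simp_all add: E_def e_def expectation_le_max_gain)
  then show ?thesis
    by (intro pmf_expectation_eq_imp_eq_on_support[of _ _ "\<lambda>_. max_gain a B", OF _ _ _ x])
      (simp_all add: e_def marg_gain_le_max_gain)
qed

lemma set_pmf_gs_step_subset:
  assumes "l \<ge> 1"
  shows "set_pmf (gs_step a p l B) \<subseteq> (\<lambda>x. B \<union> {x}) ` set_pmf p"
proof
  fix C assume "C \<in> set_pmf (gs_step a p l B)"
  then obtain xs j where xs: "xs \<in> set_pmf (replicate_pmf l p)"
    and j: "j \<in> set_pmf (pmf_of_set {j. j < l \<and> marg_gain a (xs ! j) B =
                Max ((\<lambda>x. marg_gain a x B) ` set xs)})"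
    and C: "C = B \<union> {xs ! j}"
    unfolding gs_step_def Let_def by auto
  have len: "length xs = l" and "set xs \<subseteq> set_pmf p"
    using xs by (auto simp: set_replicate_pmf)
  have "Max ((\<lambda>x. marg_gain a x B) ` set xs) \<in> (\<lambda>x. marg_gain a x B) ` set xs"
    using len assms by (intro Max_in) auto
  then have "{j. j < l \<and> marg_gain a (xs ! j) B = Max ((\<lambda>x. marg_gain a x B) ` set xs)} \<noteq> {}"
    using len by (auto simp: in_set_conv_nth)
  then have "j < l"
    using j by auto
  then have "xs ! j \<in> set_pmf p"
    using \<open>set xs \<subseteq> set_pmf p\<close> len by auto
  then show "C \<in> (\<lambda>x. B \<union> {x}) ` set_pmf p"
    using C by blast
qed

lemma set_pmf_gs_step_one:
  assumes "x \<in> set_pmf p"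
  shows "B \<union> {x} \<in> set_pmf (gs_step a p 1 B)"
proof -
  have "[x] \<in> set_pmf (replicate_pmf 1 p)"
    using assms by (auto simp: set_replicate_pmf)
  moreover have "{j. j < 1 \<and> marg_gain a ([x] ! j) B = Max ((\<lambda>y. marg_gain a y B) ` set [x])} = {0}"
    by auto
  ultimately show ?thesis
    unfolding gs_step_def Let_def by (auto intro!: bexI[of _ "[x]"])
qed

lemma exact_greedy_solution_empty: "exact_greedy_solution a 0 {}"
  unfolding exact_greedy_solution_def by simp

lemma exact_greedy_solution_extend:
  assumes "exact_greedy_solution a k B" and "\<And>x'. marg_gain a x' B \<le> marg_gain a x B"
  shows "exact_greedy_solution a (Suc k) (B \<union> {x})"
proof -
  obtain xs where xs: "length xs = k" "B = set xs"
    and greedy: "\<forall>t<k. \<forall>x'. marg_gain a x' (set (take t xs)) \<le> marg_gain a (xs ! t) (set (take t xs))"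
    using assms(1) unfolding exact_greedy_solution_def by blast
  have "marg_gain a x' (set (take t (xs @ [x]))) \<le> marg_gain a ((xs @ [x]) ! t) (set (take t (xs @ [x])))"
    if "t < Suc k" for t x'
    using that xs greedy assms(2) by (cases "t < k") (auto simp: nth_append)
  then show ?thesis
    unfolding exact_greedy_solution_def using xs by (intro exI[of _ "xs @ [x]"]) auto
qed

lemma GS_exact_greedy_if_proposals_greedy:
  fixes a :: "('x::finite) set \<Rightarrow> real" and pol :: "'th \<Rightarrow> 'x set \<Rightarrow> 'x pmf"
  assumes "l \<ge> 1"
    and proposals: "\<And>k B x. k < n \<Longrightarrow> B \<in> set_pmf (GS a pol \<theta> k 1) \<Longrightarrow>
                      x \<in> set_pmf (pol \<theta> B) \<Longrightarrow> marg_gain a x B = max_gain a B"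
  shows "set_pmf (GS a pol \<theta> n l) \<subseteq> {B. exact_greedy_solution a n B}"
proof -
  have "B \<in> set_pmf (GS a pol \<theta> k 1) \<and> exact_greedy_solution a k B"
    if "k \<le> n" "B \<in> set_pmf (GS a pol \<theta> k l)" for k B
    using that
  proof (induction k arbitrary: B)
    case 0
    then show ?case by (simp add: exact_greedy_solution_empty)
  next
    case (Suc k)
    then obtain B0 where B0: "B0 \<in> set_pmf (GS a pol \<theta> k l)"
      and "B \<in> set_pmf (gs_step a (pol \<theta> B0) l B0)" by auto
    then obtain x where x: "x \<in> set_pmf (pol \<theta> B0)" and B: "B = B0 \<union> {x}"
      using set_pmf_gs_step_subset[OF assms(1)] by blast
    have IH: "B0 \<in> set_pmf (GS a pol \<theta> k 1)" "exact_greedy_solution a k B0"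
      using Suc B0 by auto
    have "marg_gain a x B0 = max_gain a B0"
      using proposals[OF _ IH(1) x] Suc.prems(1) by simp
    then have "exact_greedy_solution a (Suc k) B"
      unfolding B by (intro exact_greedy_solution_extend IH(2)) (simp add: marg_gain_le_max_gain)
    moreover have "B \<in> set_pmf (GS a pol \<theta> (Suc k) 1)"
      using IH(1) set_pmf_gs_step_one[OF x] B by auto
    ultimately show ?case by simp
  qed
  then show ?thesis by blast
qed

theorem mainTheorem5:
  fixes a :: "('x::finite) set \<Rightarrow> real"
    and pol :: "'th \<Rightarrow> 'x set \<Rightarrow> 'x pmf"
    and n l :: nat
    and \<theta>star :: 'th
  assumes "monotone_setfun a"
    and "n \<ge> 1" and "l \<ge> 1"
    and "expressive pol"
    and "\<forall>\<theta>. expected_gain a pol n \<theta>star \<theta>star \<ge> expected_gain a pol n \<theta> \<theta>star"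
  shows "measure_pmf.prob (GS a pol \<theta>star n l) {B. exact_greedy_solution a n B} = 1"
proof -
  have "set_pmf (GS a pol \<theta>star n l) \<subseteq> {B. exact_greedy_solution a n B}"
    using assms(3) greedy_policy_proposes_max_gain[OF assms(4,5)]
    by (rule GS_exact_greedy_if_proposals_greedy)
  then show ?thesis
    by (subst measure_pmf.prob_eq_1) (auto simp: AE_measure_pmf_iff)
qed

end
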